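(* Let $\nu>0$, let $\mathbf{f}\in L^{\infty}(\mathbb{R}_+;\mathbf{V}_h^* )$, and let $\mathbf{u}_h^{0}=\mathbf{u}_h^{-1}=\mathbf{u}_h^{-2}\in \mathbf{V}_h$ be given initial data. For any time step $\Delta t>0$, let $(\mathbf{u}_h^{n+1},p_h^{n+1})\in \mathbf{X}_h\times Q_h$, $n\ge 0$, be the solution of the extrapolated blended BDF (BLEBDF) scheme for the Navier–Stokes equations: for all $(\mathbf{v}_h,q_h)\in \mathbf{X}_h\times Q_h$, $$\Big(\tfrac{\frac{5}{3}\mathbf{u}_h^{n+1}-\frac{5}{2}\mathbf{u}_h^n+\mathbf{u}_h^{n-1}-\frac{1}{6}\mathbf{u}_h^{n-2}}{\Delta t},\mathbf{v}_h\Big)+\nu(\nabla \mathbf{u}_h^{n+1},\nabla\mathbf{v}_h)+b_1(3\mathbf{u}_h^n-3\mathbf{u}_h^{n-1}+\mathbf{u}_h^{n-2},\mathbf{u}_h^{n+1},\mathbf{v}_h)-(p_h^{n+1},\nabla\cdot\mathbf{v}_h)=(\mathbf{f}^{n+1},\mathbf{v}_h),$$ $$(\nabla\cdot \mathbf{u}_h^{n+1},q_h)=0,$$ where $\mathbf{f}^{n+1}=\mathbf{f}(t^{n+1})$, $t^{n}=n\Delta t$. Set $\mathcal{U}_{k}=[\mathbf{u}_h^{k},\mathbf{u}_h^{k-1},\mathbf{u}_h^{k-2}]^\top$ and $\alpha=\min\{\frac{C_l\nu\Delta t}{16C_P^2},\frac34\}$. Then for every $n\ge 0$, $$\|\mathcal{U}_{n+1}\|_G^2+\frac{\nu\Delta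 t}{4}\|\nabla \mathbf{u}_h^{n+1}\|^2+\frac{\nu\Delta t}{16}\|\nabla\mathbf{u}_h^{n}\|^2\le (1+\alpha)^{-(n+1)}\Big(\|\mathcal{U}_0\|_G^2+\frac{\nu\Delta t}{4}\|\nabla\mathbf{u}_h^{0}\|^2+\frac{\nu\Delta t}{16}\|\nabla\mathbf{u}_h^{-1}\|^2\Big)+\max\Big\{\frac{8C_P^2}{C_l\nu^2},\frac{2\nu^{-1}\Delta t}{3}\Big\}\|\mathbf{f}\|^2_{L^\infty(\mathbb{R}_+;\mathbf{V}_h^* )}.$$
   Context: $\Omega\subset\mathbb{R}^d$, $d\in\{2,3\}$, is a bounded connected Lipschitz domain; $\|\cdot\|$ and $(\cdot,\cdot)$ denote the $L^2(\Omega)$ norm and inner product. $\mathbf{X}=(H^1_0(\Omega))^d$, $Q=L^2_0(\Omega)$ (mean-zero $L^2$ functions). $C_P$ is the Poincaré–Friedrichs constant: $\|\mathbf{v}\|\le C_P\|\nabla\mathbf{v}\|$ for all $\mathbf{v}\in\mathbf{X}$ (also for scalar $H^1_0$ functions). $\mathbf{X}_h\subset\mathbf{X}$, $Q_h\subset Q$ are conforming finite element spaces on a regular triangulation satisfying the discrete inf-sup condition, and $\mathbf{V}_h=\{\mathbf{v}_h\in\mathbf{X}_h:(\nabla\cdot\mathbf{v}_h,q_h)=0\ \forall q_h\in Q_h\}$. The dual norm is $\|\mathbf{f}\|_{\mathbf{V}_h^*}=\sup_{0\ne\mathbf{v}_h\in\mathbf{V}_h}(\mathbf{f},\mathbf{v}_h)/\|\nabla\mathbf{v}_h\|$,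 and $L^\infty(\mathbb{R}_+;\mathbf{V}_h^* )$ is the space of $\mathbf{f}$ with $\|\mathbf{f}\|_{L^\infty(\mathbb{R}_+;\mathbf{V}_h^* )}:=\operatorname{ess\,sup}_{t>0}\|\mathbf{f}(t)\|_{\mathbf{V}_h^*}<\infty$ (and the bound holds at each $t^{n}$). The skew-symmetric trilinear form is $b_1(\mathbf{u},\mathbf{v},\mathbf{w})=\frac12\big(((\mathbf{u}\cdot\nabla)\mathbf{v},\mathbf{w})-((\mathbf{u}\cdot\nabla)\mathbf{w},\mathbf{v})\big)$. The $G$-matrix is $G=\frac{1}{12}\begin{pmatrix}19&-12&3\\-12&10&-3\\3&-3&1\end{pmatrix}$, and for $\mathcal{W}=[w_1,w_2,w_3]^\top$ with $w_i\in L^2(\Omega)$ (scalar or vector), $\|\mathcal{W}\|_G^2=\sum_{i,j=1}^3G_{ij}(w_i,w_j)$. The constants $0<C_l<C_u$ satisfy $C_l\|\mathcal{W}\|_G^2\le\|\mathcal{W}\|^2\le C_u\|\mathcal{W}\|_G^2$ for all such $\mathcal{W}$, where $\|\mathcal{W}\|^2=\sum_i\|w_i\|^2$. *)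

theory Defs
  imports "HOL-Analysis.Analysis" "HOL-Probability.Essential_Supremum"
begin

text \<open>Abstract Hilbert-space setting. 'v models (L^2(Omega))^d, 'm models
  (L^2(Omega))^(d x d) (values of gradients), 's models L^2(Omega) (pressures,
  divergences). The L^2 inner product is the inner product of these types.\<close>

text \<open>Skew-symmetric trilinear form built from the convection form
  conv u v w = ((u . grad) v, w).\<close>
definition b1 :: "('v \<Rightarrow> 'v \<Rightarrow> 'v \<Rightarrow> real) \<Rightarrow> 'v \<Rightarrow> 'v \<Rightarrow> 'v \<Rightarrow> real" where
  "b1 conv u v w = (conv u v w - conv u w v) / 2"

definition Vh :: "'v set \<Rightarrow> 's::real_inner set \<Rightarrow> ('v \<Rightarrow> 's) \<Rightarrow> 'v set" where
  "Vh Xh Qh dv = {v \<in> Xh. \<forall>q\<in>Qh. inner (dv v) q = 0}"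

text \<open>Dual norm on V_h^*, f acting by (f, v_h); the supremum over the empty
  set is taken as 0 (inserting 0 does not change it otherwise since the
  quotient set is symmetric).\<close>
definition dual_norm :: "'v set \<Rightarrow> ('v::real_inner \<Rightarrow> 'm::real_inner) \<Rightarrow> 'v \<Rightarrow> real" where
  "dual_norm V grad f = Sup (insert 0 {inner f v / norm (grad v) | v. v \<in> V \<and> v \<noteq> 0})"

definition Linf_norm :: "'v set \<Rightarrow> ('v::real_inner \<Rightarrow> 'm::real_inner) \<Rightarrow> (real \<Rightarrow> 'v) \<Rightarrow> ereal" where
  "Linf_norm V grad f = esssup (lebesgue_on {0<..}) (\<lambda>t. ereal (dual_norm V grad (f t)))"

definition Gnorm2 :: "'v::real_inner \<Rightarrow> 'v \<Rightarrow> 'v \<Rightarrow> real" where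
  "Gnorm2 w1 w2 w3 =
     (19 * inner w1 w1 - 12 * inner w1 w2 + 3 * inner w1 w3
      - 12 * inner w2 w1 + 10 * inner w2 w2 - 3 * inner w2 w3
      + 3 * inner w3 w1 - 3 * inner w3 w2 + inner w3 w3) / 12"

end

theory Submission
  imports Defs
begin

text \<open>Testing the scheme with the new iterate kills the convection term (skew-symmetry of b1)
  and the pressure term (discrete incompressibility). The BDF3-type difference quotient then
  telescopes in the G-norm, the forcing is absorbed by Young's inequality, and part of the viscous
  dissipation controls a fixed fraction \<alpha> of the energy through the Poincare inequality and the
  equivalence of the G-norm with the L^2 norm. The resulting contraction
  (1 + \<alpha>) E_{n+1} \<le> E_n + \<Delta>t \<parallel>f\<parallel>^2 / (2 \<nu>) is iterated.\<close>

lemma Gnorm2_difference_identity: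
  fixes a b c d :: "'v::real_inner"
  shows "inner ((5/3) *\<^sub>R a - (5/2) *\<^sub>R b + c - (1/6) *\<^sub>R d) a
     = Gnorm2 a b c - Gnorm2 b c d + (norm (a - 3 *\<^sub>R b + 3 *\<^sub>R c - d))\<^sup>2 / 12"
  by (simp add: Gnorm2_def power2_norm_eq_inner inner_add_left inner_add_right
        inner_diff_left inner_diff_right inner_commute algebra_simps) (simp add: field_simps)

lemma Gnorm2_difference_le:
  fixes a b c d :: "'v::real_inner"
  shows "Gnorm2 a b c - Gnorm2 b c d \<le> inner ((5/3) *\<^sub>R a - (5/2) *\<^sub>R b + c - (1/6) *\<^sub>R d) a"
  unfolding Gnorm2_difference_identity by simp

lemma b1_same_args [simp]: "b1 conv u v v = 0"
  by (simp add: b1_def)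

lemma bdd_above_dual_norm_quotients:
  fixes grad :: "'v::real_inner \<Rightarrow> 'm::real_inner"
  assumes poincare: "\<forall>w\<in>V. norm w \<le> C * norm (grad w)"
  shows "bdd_above (insert 0 {inner f v / norm (grad v) | v. v \<in> V \<and> v \<noteq> 0})"
proof (rule bdd_aboveI[where M = "max 0 (C * norm f)"])
  fix x assume "x \<in> insert 0 {inner f v / norm (grad v) | v. v \<in> V \<and> v \<noteq> 0}"
  then consider "x = 0" | w where "x = inner f w / norm (grad w)" "w \<in> V" "w \<noteq> 0" by blast
  then show "x \<le> max 0 (C * norm f)"
  proof cases
    case 2
    have "0 < norm w" using 2 by simp
    also have "\<dots> \<le> C * norm (grad w)" using poincare 2 by blast
    finally have grad_pos: "0 < norm (grad w)"
      by (metis mult_zero_right norm_ge_zero order.not_eq_order_implies_strict order_less_irrefl)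
    have "inner f w \<le> norm f * norm w" by (rule norm_cauchy_schwarz)
    also have "\<dots> \<le> norm f * (C * norm (grad w))" using poincare 2 by (simp add: mult_left_mono)
    finally have "x \<le> C * norm f" using 2 grad_pos by (simp add: divide_le_eq mult_ac)
    then show ?thesis by linarith
  qed simp
qed

lemma dual_norm_nonneg:
  assumes "\<forall>w\<in>V. norm w \<le> C * norm (grad w)"
  shows "0 \<le> dual_norm V grad f"
  unfolding dual_norm_def by (rule cSup_upper[OF _ bdd_above_dual_norm_quotients[OF assms]]) simp

lemma inner_le_dual_norm:
  assumes poincare: "\<forall>w\<in>V. norm w \<le> C * norm (grad w)" and "v \<in> V"
  shows "inner f v \<le> dual_norm V grad f * norm (grad v)"
proof (cases "v = 0")
  case True
  then show ?thesis using dual_norm_nonneg[OF poincare] by simp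
next
  case False
  have "0 < norm v" using False by simp
  also have "\<dots> \<le> C * norm (grad v)" using poincare \<open>v \<in> V\<close> by blast
  finally have grad_pos: "0 < norm (grad v)"
    by (metis mult_zero_right norm_ge_zero order.not_eq_order_implies_strict order_less_irrefl)
  have "inner f v / norm (grad v) \<le> dual_norm V grad f" unfolding dual_norm_def
    by (rule cSup_upper[OF _ bdd_above_dual_norm_quotients[OF poincare]]) (use \<open>v \<in> V\<close> False in blast)
  then show ?thesis using grad_pos by (simp add: divide_le_eq)
qed

lemma inner_le_Linf_norm:
  assumes poincare: "\<forall>w\<in>V. norm w \<le> C * norm (grad w)"
    and finite: "Linf_norm V grad f < \<infinity>"
    and nodes: "\<forall>k::nat. ereal (dual_norm V grad (f (real k * dt))) \<le> Linf_norm V grad f"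
    and "v \<in> V"
  shows "inner (f (real k * dt)) v \<le> real_of_ereal (Linf_norm V grad f) * norm (grad v)"
proof -
  have "ereal (dual_norm V grad (f (real k * dt))) \<le> Linf_norm V grad f"
    "0 \<le> dual_norm V grad (f (real k * dt))"
    using nodes dual_norm_nonneg[OF poincare] by simp_all
  then have "dual_norm V grad (f (real k * dt)) \<le> real_of_ereal (Linf_norm V grad f)"
    using finite by (cases "Linf_norm V grad f") simp_all
  then have "dual_norm V grad (f (real k * dt)) * norm (grad v)
      \<le> real_of_ereal (Linf_norm V grad f) * norm (grad v)"
    by (rule mult_right_mono) simp
  then show ?thesis using inner_le_dual_norm[OF poincare \<open>v \<in> V\<close>] by (rule order_trans[rotated])
qed

lemma test_with_divergence_free_solution:
  assumes "a \<in> Vh Xh Qh dv" "p \<in> Qh"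
    and equation: "\<forall>v\<in>Xh. inner w v + \<nu> * inner (grad a) (grad v) + b1 conv z a v - inner p (dv v)
                          = inner g v"
    and forcing: "inner g a \<le> M * norm (grad a)"
  shows "inner w a + \<nu> * inner (grad a) (grad a) \<le> M * norm (grad a)"
proof -
  have "a \<in> Xh" using assms(1) by (simp add: Vh_def)
  then have "inner w a + \<nu> * inner (grad a) (grad a) + b1 conv z a a - inner p (dv a) = inner g a"
    using equation by blast
  moreover have "inner p (dv a) = 0" using assms(1,2) by (simp add: Vh_def inner_commute)
  ultimately show ?thesis using forcing by simp
qed

lemma Gnorm2_le_grad_norms:
  fixes a b c :: "'v::real_inner" and grad :: "'v \<Rightarrow> 'm::real_inner"
  assumes Cl: "0 < C_l"
    and G_lower: "C_l * Gnorm2 a b c \<le> (norm a)\<^sup>2 + (norm b)\<^sup>2 + (norm c)\<^sup>2"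
    and poincare: "\<forall>w\<in>{a, b, c}. norm w \<le> C_P * norm (grad w)"
  shows "Gnorm2 a b c \<le> C_P\<^sup>2 / C_l * ((norm (grad a))\<^sup>2 + (norm (grad b))\<^sup>2 + (norm (grad c))\<^sup>2)"
proof -
  have sq: "(norm w)\<^sup>2 \<le> C_P\<^sup>2 * (norm (grad w))\<^sup>2" if "w \<in> {a, b, c}" for w
    using power_mono[OF bspec[OF poincare that] norm_ge_zero] by (simp add: power_mult_distrib)
  have "C_l * Gnorm2 a b c \<le> C_P\<^sup>2 * ((norm (grad a))\<^sup>2 + (norm (grad b))\<^sup>2 + (norm (grad c))\<^sup>2)"
    using G_lower sq[of a] sq[of b] sq[of c] by (simp add: algebra_simps)
  then show ?thesis using Cl by (simp add: field_simps)
qed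

text \<open>With s = \<nu> \<Delta>t and (a, b, c) = (u^n, u^{n-1}, u^{n-2}) this is the left-hand side E_n of the estimate.\<close>
definition energy :: "('v::real_inner \<Rightarrow> 'm::real_inner) \<Rightarrow> real \<Rightarrow> 'v \<Rightarrow> 'v \<Rightarrow> 'v \<Rightarrow> real" where
  "energy grad s a b c = Gnorm2 a b c + s / 4 * (norm (grad a))\<^sup>2 + s / 16 * (norm (grad b))\<^sup>2"

lemma energy_contraction_step:
  fixes a b c d :: "'v::real_inner" and grad :: "'v \<Rightarrow> 'm::real_inner"
  assumes nu: "0 < \<nu>" and dt: "0 < dt" and Cl: "0 < C_l"
    and G_lower: "C_l * Gnorm2 a b c \<le> (norm a)\<^sup>2 + (norm b)\<^sup>2 + (norm c)\<^sup>2"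
    and poincare: "\<forall>w\<in>{a, b, c}. norm w \<le> C_P * norm (grad w)"
    and alpha: "0 \<le> \<alpha>" "\<alpha> \<le> C_l * \<nu> * dt / (16 * C_P\<^sup>2)" "\<alpha> \<le> 3/4"
    and tested: "inner ((1 / dt) *\<^sub>R ((5/3) *\<^sub>R a - (5/2) *\<^sub>R b + c - (1/6) *\<^sub>R d)) a
                   + \<nu> * inner (grad a) (grad a) \<le> M * norm (grad a)"
  shows "(1 + \<alpha>) * energy grad (\<nu> * dt) a b c \<le> energy grad (\<nu> * dt) b c d + dt * M\<^sup>2 / (2 * \<nu>)"
proof -
  define A B C where "A = (norm (grad a))\<^sup>2" and "B = (norm (grad b))\<^sup>2" and "C = (norm (grad c))\<^sup>2"
  define s where "s = \<nu> * dt"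
  have s_pos: "0 < s" using nu dt by (simp add: s_def)
  have young: "M * norm (grad a) \<le> \<nu> * A / 2 + M\<^sup>2 / (2 * \<nu>)"
  proof -
    have "2 * \<nu> * (M * norm (grad a)) \<le> \<nu> * \<nu> * A + M\<^sup>2"
      using zero_le_power2[of "\<nu> * norm (grad a) - M"]
      unfolding A_def by (simp add: power2_eq_square algebra_simps)
    then show ?thesis using nu by (simp add: field_simps power2_eq_square)
  qed
  have "(Gnorm2 a b c - Gnorm2 b c d) / dt + \<nu> * A \<le> M * norm (grad a)"
    using tested divide_right_mono[OF Gnorm2_difference_le[of a b c d], of dt] dt
    by (simp add: A_def power2_norm_eq_inner)
  then have "(Gnorm2 a b c - Gnorm2 b c d) / dt + \<nu> * A / 2 \<le> M\<^sup>2 / (2 * \<nu>)"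
    using young by linarith
  then have stability: "Gnorm2 a b c + s / 2 * A \<le> Gnorm2 b c d + dt * M\<^sup>2 / (2 * \<nu>)"
    using dt by (simp add: s_def field_simps)
  have "\<alpha> * (C_P\<^sup>2 / C_l) \<le> s / 16"
  proof (cases "C_P = 0")
    case False
    then show ?thesis using alpha(2) Cl by (simp add: s_def field_simps)
  qed (use s_pos in simp)
  then have "\<alpha> * Gnorm2 a b c \<le> s / 16 * (A + B + C)"
  proof -
    assume alpha_s: "\<alpha> * (C_P\<^sup>2 / C_l) \<le> s / 16"
    have "\<alpha> * Gnorm2 a b c \<le> \<alpha> * (C_P\<^sup>2 / C_l * (A + B + C))"
      using mult_left_mono[OF Gnorm2_le_grad_norms[OF Cl G_lower poincare] alpha(1)]
      by (simp add: A_def B_def C_def)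
    also have "\<dots> \<le> s / 16 * (A + B + C)"
      using mult_right_mono[OF alpha_s, of "A + B + C"] by (simp add: A_def B_def C_def mult.assoc)
    finally show ?thesis .
  qed
  moreover have "\<alpha> * (s * A) \<le> 3/4 * (s * A)" "\<alpha> * (s * B) \<le> 3/4 * (s * B)"
    using alpha(3) s_pos by (intro mult_right_mono; simp add: A_def B_def)+
  moreover have "0 \<le> s * B" "0 \<le> s * C" using s_pos by (simp_all add: B_def C_def)
  moreover have "(1 + \<alpha>) * energy grad s a b c = Gnorm2 a b c + \<alpha> * Gnorm2 a b c
      + s * A / 4 + \<alpha> * (s * A) / 4 + s * B / 16 + \<alpha> * (s * B) / 16"
    by (simp add: energy_def A_def B_def algebra_simps add_divide_distrib)
  moreover have "energy grad s b c d = Gnorm2 b c d + s * B / 4 + s * C / 16"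
    by (simp add: energy_def B_def C_def)
  ultimately have "(1 + \<alpha>) * energy grad s a b c \<le> energy grad s b c d + dt * M\<^sup>2 / (2 * \<nu>)"
    using stability by (simp add: algebra_simps add_divide_distrib)
  then show ?thesis by (simp add: s_def)
qed

lemma contraction_recursion_bound:
  fixes e :: "nat \<Rightarrow> real"
  assumes "0 < \<alpha>" "0 \<le> D" and step: "\<And>m. (1 + \<alpha>) * e (Suc m) \<le> e m + D"
  shows "e m \<le> e 0 / (1 + \<alpha>) ^ m + D / \<alpha>"
proof (induction m)
  case 0
  then show ?case using assms by simp
next
  case (Suc m)
  have "(1 + \<alpha>) * e (Suc m) \<le> e 0 / (1 + \<alpha>) ^ m + D / \<alpha> + D"
    using step[of m] Suc by linarith
  also have "\<dots> = (1 + \<alpha>) * (e 0 / (1 + \<alpha>) ^ Suc m + D / \<alpha>)"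
    using \<open>0 < \<alpha>\<close> by (simp add: distrib_left) (simp add: field_simps)
  finally show ?case using \<open>0 < \<alpha>\<close> by simp
qed

lemma divide_min_eq_max_divide:
  fixes x a b :: real
  assumes "0 < a" "0 < b" "0 \<le> x"
  shows "x / min a b = max (x / a) (x / b)"
proof (cases "a \<le> b")
  case True
  then show ?thesis using assms divide_left_mono[of a b x] by (simp add: max_def min_def)
next
  case False
  then show ?thesis using assms divide_left_mono[of b a x] by (simp add: max_def min_def)
qed

lemma forcing_over_contraction_rate:
  fixes C_l C_P \<nu> dt M :: real
  assumes "0 < C_l" "0 < \<nu>" "0 < dt" "0 < C_P"
  shows "dt * M\<^sup>2 / (2 * \<nu>) / min (C_l * \<nu> * dt / (16 * C_P\<^sup>2)) (3/4)
       = max (8 * C_P\<^sup>2 / (C_l * \<nu>\<^sup>2)) (2 * dt / (3 * \<nu>)) * M\<^sup>2"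
proof -
  have "dt * M\<^sup>2 / (2 * \<nu>) / min (C_l * \<nu> * dt / (16 * C_P\<^sup>2)) (3/4)
      = max (dt * M\<^sup>2 / (2 * \<nu>) / (C_l * \<nu> * dt / (16 * C_P\<^sup>2))) (dt * M\<^sup>2 / (2 * \<nu>) / (3/4))"
    by (rule divide_min_eq_max_divide) (use assms in simp_all)
  also have "\<dots> = max (8 * C_P\<^sup>2 / (C_l * \<nu>\<^sup>2) * M\<^sup>2) (2 * dt / (3 * \<nu>) * M\<^sup>2)"
    using assms by (simp add: field_simps power2_eq_square)
  finally show ?thesis by (simp add: max_mult_distrib_right)
qed

theorem theorem1:
  fixes X Xh :: "'v::real_inner set"
    and Q Qh :: "'s::real_inner set"
    and grad :: "'v \<Rightarrow> 'm::real_inner"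
    and dv :: "'v \<Rightarrow> 's"
    and conv :: "'v \<Rightarrow> 'v \<Rightarrow> 'v \<Rightarrow> real"
    and C_P C_l C_u \<nu> dt :: real
    and f :: "real \<Rightarrow> 'v"
    and u :: "int \<Rightarrow> 'v"
    and p :: "int \<Rightarrow> 's"
    and n :: nat
  assumes spaces: "subspace X" "subspace Q" "subspace Xh" "subspace Qh" "Xh \<subseteq> X" "Qh \<subseteq> Q"
    and fin_dim: "\<exists>B. finite B \<and> span B = Xh" "\<exists>B. finite B \<and> span B = Qh"
    and ops: "linear grad" "linear dv" "dv ` X \<subseteq> Q"
    and conv_lin: "\<And>v w. linear (\<lambda>u. conv u v w)" "\<And>u w. linear (\<lambda>v. conv u v w)"
                  "\<And>u v. linear (\<lambda>w. conv u v w)"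
    and inf_sup: "\<exists>\<beta>>0. \<forall>q\<in>Qh. q \<noteq> 0 \<longrightarrow>
                    (\<exists>v\<in>Xh. v \<noteq> 0 \<and> \<beta> * norm q * norm (grad v) \<le> inner (dv v) q)"
    and poincare: "C_P > 0" "\<forall>v\<in>X. norm v \<le> C_P * norm (grad v)"
    and G_equiv: "0 < C_l" "C_l < C_u"
      "\<forall>w1 w2 w3 :: 'v. C_l * Gnorm2 w1 w2 w3 \<le> (norm w1)\<^sup>2 + (norm w2)\<^sup>2 + (norm w3)\<^sup>2"
      "\<forall>w1 w2 w3 :: 'v. (norm w1)\<^sup>2 + (norm w2)\<^sup>2 + (norm w3)\<^sup>2 \<le> C_u * Gnorm2 w1 w2 w3"
    and nu: "\<nu> > 0" and dt: "dt > 0"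
    and f_Linf: "Linf_norm (Vh Xh Qh dv) grad f < \<infinity>"
    and f_nodes: "\<forall>k::nat. ereal (dual_norm (Vh Xh Qh dv) grad (f (real k * dt)))
                     \<le> Linf_norm (Vh Xh Qh dv) grad f"
    and init: "u 0 \<in> Vh Xh Qh dv" "u (-1) = u 0" "u (-2) = u 0"
    and scheme: "\<forall>k::nat. u (int k + 1) \<in> Xh \<and> p (int k + 1) \<in> Qh \<and>
        (\<forall>v\<in>Xh.
            inner ((1 / dt) *\<^sub>R ((5/3) *\<^sub>R u (int k + 1) - (5/2) *\<^sub>R u (int k)
                                   + u (int k - 1) - (1/6) *\<^sub>R u (int k - 2))) v
          + \<nu> * inner (grad (u (int k + 1))) (grad v)
          + b1 conv (3 *\<^sub>R u (int k) - 3 *\<^sub>R u (int k - 1) + u (int k - 2)) (u (int k + 1)) v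
          - inner (p (int k + 1)) (dv v)
          = inner (f (real (k + 1) * dt)) v) \<and>
        (\<forall>q\<in>Qh. inner (dv (u (int k + 1))) q = 0)"
  shows "Gnorm2 (u (int n + 1)) (u (int n)) (u (int n - 1))
           + \<nu> * dt / 4 * (norm (grad (u (int n + 1))))\<^sup>2
           + \<nu> * dt / 16 * (norm (grad (u (int n))))\<^sup>2
         \<le> (Gnorm2 (u 0) (u (-1)) (u (-2))
              + \<nu> * dt / 4 * (norm (grad (u 0)))\<^sup>2
              + \<nu> * dt / 16 * (norm (grad (u (-1))))\<^sup>2)
             / (1 + min (C_l * \<nu> * dt / (16 * C_P\<^sup>2)) (3/4)) ^ (n + 1)
           + max (8 * C_P\<^sup>2 / (C_l * \<nu>\<^sup>2)) (2 * dt / (3 * \<nu>))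
             * (real_of_ereal (Linf_norm (Vh Xh Qh dv) grad f))\<^sup>2"
proof -
  define M where "M = real_of_ereal (Linf_norm (Vh Xh Qh dv) grad f)"
  define \<alpha> where "\<alpha> = min (C_l * \<nu> * dt / (16 * C_P\<^sup>2)) (3/4)"
  define e where "e m = energy grad (\<nu> * dt) (u (int m)) (u (int m - 1)) (u (int m - 2))" for m :: nat
  have poincare_V: "\<forall>w\<in>Vh Xh Qh dv. norm w \<le> C_P * norm (grad w)"
    using poincare(2) spaces(5) by (auto simp: Vh_def)
  have u_V: "u j \<in> Vh Xh Qh dv" if j_ge: "-2 \<le> j" for j :: int
  proof -
    consider "0 < j" | "j = 0" | "j = -1" | "j = -2" using j_ge by linarith
    then show ?thesis
    proof cases
      case 1
      then have "j = int (nat (j - 1)) + 1" by simp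
      then show ?thesis using scheme[rule_format, of "nat (j - 1)"] by (simp add: Vh_def)
    qed (use init in simp_all)
  qed
  have alpha: "0 \<le> \<alpha>" "\<alpha> \<le> C_l * \<nu> * dt / (16 * C_P\<^sup>2)" "\<alpha> \<le> 3/4" "0 < \<alpha>"
    using G_equiv(1) nu dt poincare(1) by (auto simp: \<alpha>_def)
  have step: "(1 + \<alpha>) * e (Suc k) \<le> e k + dt * M\<^sup>2 / (2 * \<nu>)" for k
  proof -
    have u_new: "u (int k + 1) \<in> Vh Xh Qh dv" using u_V by simp
    have forcing: "inner (f (real (k + 1) * dt)) (u (int k + 1)) \<le> M * norm (grad (u (int k + 1)))"
      using inner_le_Linf_norm[OF poincare_V f_Linf f_nodes u_new, of "k + 1"] by (simp add: M_def)
    have "inner ((1 / dt) *\<^sub>R ((5/3) *\<^sub>R u (int k + 1) - (5/2) *\<^sub>R u (int k)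
                + u (int k - 1) - (1/6) *\<^sub>R u (int k - 2))) (u (int k + 1))
             + \<nu> * inner (grad (u (int k + 1))) (grad (u (int k + 1))) \<le> M * norm (grad (u (int k + 1)))"
      using scheme[rule_format, of k] test_with_divergence_free_solution[where grad = grad, OF u_new _ _ forcing]
      by blast
    moreover have "\<forall>w\<in>{u (int k + 1), u (int k), u (int k - 1)}. norm w \<le> C_P * norm (grad w)"
      using u_V poincare_V by simp
    ultimately have "(1 + \<alpha>) * energy grad (\<nu> * dt) (u (int k + 1)) (u (int k)) (u (int k - 1))
        \<le> energy grad (\<nu> * dt) (u (int k)) (u (int k - 1)) (u (int k - 2)) + dt * M\<^sup>2 / (2 * \<nu>)"
      by (rule energy_contraction_step[OF nu dt G_equiv(1) G_equiv(3)[rule_format] _ alpha(1-3), rotated])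
    then show ?thesis by (simp add: e_def add.commute)
  qed
  have "e (Suc n) \<le> e 0 / (1 + \<alpha>) ^ Suc n + dt * M\<^sup>2 / (2 * \<nu>) / \<alpha>"
    by (rule contraction_recursion_bound[of \<alpha> _ e, OF alpha(4) _ step]) (use nu dt in simp)
  then show ?thesis
    using init(2,3) forcing_over_contraction_rate[OF G_equiv(1) nu dt poincare(1), of M]
    by (simp add: e_def energy_def M_def \<alpha>_def add.commute)
qed

end
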